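(* Let $N=2$ and let $k\in\mathbb{R}$, $k\ge1$. Then $$\lim_{p\to+\infty}\lambda_1(B_1^{\pi/k};p)^{1/p}=\frac{1+\sin\left(\frac{\pi}{2k}\right)}{\sin\left(\frac{\pi}{2k}\right)}.$$ In particular $\lim_{p\to+\infty}\tau_k(p)^{1/p}=\frac{1+\sin(\pi/(2k))}{\sin(\pi/(2k))}$ for all $k\in\mathbb{N}$, and $\lim_{p\to+\infty}\tau_1(p)^{1/p}=2$, $\lim_{p\to+\infty}\tau_2(p)^{1/p}\approx2.41421$, $\lim_{p\to+\infty}\tau_3(p)^{1/p}=3$.
   Context: For a bounded domain $\Omega\subset\mathbb{R}^2$ and $p>1$, $\lambda_1(\Omega;p)=\inf\{\int_\Omega|\nabla u|^p\,dx:u\in W_0^{1,p}(\Omega),\ \|u\|_{L^p(\Omega)}=1\}$ is the first Dirichlet eigenvalue of the $p$-Laplacian. For real $k\ge1$, $B_1^{\pi/k}=\{(\rho\cos\theta,\rho\sin\theta):0<\rho<1,\ 0<\theta<\pi/k\}$; for $k\in\mathbb{N}$, $\tau_k(p)=\lambda_1(B_1^{\pi/k};p)$. *)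

theory Defs
  imports "HOL-Analysis.Analysis"
begin

definition grad :: "(real \<times> real \<Rightarrow> real) \<Rightarrow> real \<times> real \<Rightarrow> real \<times> real" where
  "grad u x = (frechet_derivative u (at x) (1, 0), frechet_derivative u (at x) (0, 1))"

definition Cc1 :: "(real \<times> real) set \<Rightarrow> (real \<times> real \<Rightarrow> real) set" where
  "Cc1 \<Omega> = {\<phi>. (\<forall>x. \<phi> differentiable (at x)) \<and> continuous_on UNIV (grad \<phi>)
      \<and> compact (closure {x. \<phi> x \<noteq> 0}) \<and> closure {x. \<phi> x \<noteq> 0} \<subseteq> \<Omega>}"

text \<open>W_0^{1,p}(\<Omega>) as the closure of the test functions in the W^{1,p} norm:
  \<open>W01p \<Omega> p u g\<close> means u \<in> W_0^{1,p}(\<Omega>) (extended by zero) with weak gradient g.\<close>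
definition W01p :: "(real \<times> real) set \<Rightarrow> real \<Rightarrow> (real \<times> real \<Rightarrow> real)
    \<Rightarrow> (real \<times> real \<Rightarrow> real \<times> real) \<Rightarrow> bool" where
  "W01p \<Omega> p u g \<longleftrightarrow>
     u \<in> borel_measurable lborel \<and> g \<in> borel_measurable lborel \<and>
     integrable lborel (\<lambda>x. \<bar>u x\<bar> powr p) \<and> integrable lborel (\<lambda>x. norm (g x) powr p) \<and>
     (\<exists>\<phi>. (\<forall>n. \<phi> n \<in> Cc1 \<Omega>) \<and>
        (\<forall>n. integrable lborel (\<lambda>x. \<bar>\<phi> n x - u x\<bar> powr p)) \<and>
        (\<forall>n. integrable lborel (\<lambda>x. norm (grad (\<phi> n) x - g x) powr p)) \<and>
        (\<lambda>n. \<integral>x. \<bar>\<phi> n x - u x\<bar> powr p \<partial>lborel) \<longlonglongrightarrow> 0 \<and>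
        (\<lambda>n. \<integral>x. norm (grad (\<phi> n) x - g x) powr p \<partial>lborel) \<longlonglongrightarrow> 0)"

definition lambda1 :: "(real \<times> real) set \<Rightarrow> real \<Rightarrow> real" where
  "lambda1 \<Omega> p = Inf {(\<integral>x. norm (g x) powr p \<partial>lborel) | u g.
      W01p \<Omega> p u g \<and> (\<integral>x. \<bar>u x\<bar> powr p \<partial>lborel) = 1}"

definition sector :: "real \<Rightarrow> (real \<times> real) set" where
  "sector k = {(\<rho> * cos \<theta>, \<rho> * sin \<theta>) | \<rho> \<theta>. 0 < \<rho> \<and> \<rho> < 1 \<and> 0 < \<theta> \<and> \<theta> < pi / k}"

end

theory Submission
  imports Defs
begin

text \<open>
  Let \<open>b = \<pi>/(2k)\<close> and \<open>r = sin b / (1 + sin b)\<close>, the radius of the disc inscribed in the sector.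
  Every point of the sector leaves it within distance r along one of three fixed directions.
  Writing a test function as the integral of its gradient along such a segment and integrating
  over the sector (Jensen, Fubini) gives \<open>\<integral>|\<phi>|\<^sup>p \<le> 3 r\<^sup>p \<integral>|\<nabla>\<phi>|\<^sup>p\<close>, hence
  \<open>\<lambda>\<^sub>1(p)\<^bsup>1/p\<^esup> \<ge> 3\<^bsup>-1/p\<^esup>/r\<close>. Conversely, smoothed cones \<open>R - |x - c|\<close> over discs inside the
  inscribed disc have gradient at most 1 and are close to R near the centre, so
  \<open>\<lambda>\<^sub>1(p)\<^bsup>1/p\<^esup>\<close> is eventually below any number larger than 1/r. Both bounds tend to 1/r.
\<close>

section \<open>Elementary inequalities\<close>

lemma powr_ge_tangent:
  fixes a z p :: real
  assumes "a \<ge> 0" "z > 0" "p \<ge> 1"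
  shows "z powr p + p * z powr (p - 1) * (a - z) \<le> a powr p"
proof (cases "a = 0")
  case True
  have "z powr p + p * z powr (p - 1) * (0 - z) = (1 - p) * z powr p"
    using assms by (simp add: powr_diff field_simps)
  also have "\<dots> \<le> 0"
    using assms by (simp add: mult_nonpos_nonneg)
  finally show ?thesis
    using True by simp
next
  case False
  with assms have "p * z powr (p - 1) * (a - z) \<le> a powr p - z powr p"
    by (intro convex_on_imp_above_tangent[where A = "{0<..}", OF powr_convex])
       (auto intro!: derivative_eq_intros simp: interior_open)
  then show ?thesis
    by simp
qed

lemma powr_add_le_weighted:
  fixes x y t p :: real
  assumes "x \<ge> 0" "y \<ge> 0" "0 < t" "t < 1" "p \<ge> 1"
  shows "(x + y) powr p \<le> t powr (1 - p) * x powr p + (1 - t) powr (1 - p) * y powr p"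
proof (cases "x + y = 0")
  case True
  then show ?thesis
    using assms by auto
next
  case False
  define z where "z = x + y"
  have z: "z > 0"
    using False assms z_def by auto
  define T where "T = (\<lambda>a. z powr p + p * z powr (p - 1) * (a - z))"
  have "t * T (x / t) \<le> t * (x / t) powr p" "(1 - t) * T (y / (1 - t)) \<le> (1 - t) * (y / (1 - t)) powr p"
    unfolding T_def using assms z by (intro mult_left_mono powr_ge_tangent; simp)+
  moreover have "t * T (x / t) + (1 - t) * T (y / (1 - t)) = z powr p"
    using assms by (simp add: T_def z_def field_simps)
  moreover have "t * (x / t) powr p = t powr (1 - p) * x powr p"
    "(1 - t) * (y / (1 - t)) powr p = (1 - t) powr (1 - p) * y powr p"
    using assms by (simp_all add: powr_divide powr_diff field_simps)
  ultimately show ?thesis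
    unfolding z_def by linarith
qed

text \<open>Jensen's inequality, via the tangent line at the mean.\<close>
lemma powr_integral_le:
  fixes f :: "real \<Rightarrow> real"
  assumes f: "continuous_on {a..b} f" "\<And>s. s \<in> {a..b} \<Longrightarrow> f s \<ge> 0"
    and ab: "a < b" and p: "p \<ge> 1"
  shows "integral {a..b} f powr p \<le> (b - a) powr (p - 1) * integral {a..b} (\<lambda>s. f s powr p)"
proof -
  define I where "I = integral {a..b} f"
  have int_f: "f integrable_on {a..b}"
    using f(1) integrable_continuous_interval by blast
  have int_fp: "(\<lambda>s. f s powr p) integrable_on {a..b}"
    using f p by (intro integrable_continuous_interval continuous_on_powr') (auto intro: continuous_on_const)
  have Ip_nonneg: "integral {a..b} (\<lambda>s. f s powr p) \<ge> 0"
    using int_fp by (intro integral_nonneg) auto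
  show ?thesis
  proof (cases "I = 0")
    case True
    then show ?thesis
      using p Ip_nonneg by (simp add: I_def)
  next
    case False
    define z where "z = I / (b - a)"
    have "I \<ge> 0"
      unfolding I_def using int_f f(2) by (intro integral_nonneg) auto
    with False ab have z: "z > 0"
      by (simp add: z_def)
    have const: "((\<lambda>_. c) has_integral (b - a) * c) {a..b}" for c
      using ab has_integral_const_real[of c a b] by simp
    have int_aff: "(\<lambda>s. z powr p + p * z powr (p - 1) * (f s - z)) integrable_on {a..b}"
      using int_f by (intro integrable_add integrable_on_mult_right integrable_diff) auto
    have "integral {a..b} (\<lambda>s. z powr p + p * z powr (p - 1) * (f s - z))
        \<le> integral {a..b} (\<lambda>s. f s powr p)"
      using z f(2) p int_aff int_fp
      by (intro integral_le powr_ge_tangent) auto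
    also have "integral {a..b} (\<lambda>s. z powr p + p * z powr (p - 1) * (f s - z))
        = (b - a) * z powr p + p * z powr (p - 1) * (I - (b - a) * z)"
    proof (intro integral_unique has_integral_add has_integral_mult_right has_integral_diff)
      show "(f has_integral I) {a..b}"
        using int_f by (simp add: I_def integrable_integral)
    qed (rule const)+
    also have "\<dots> = (b - a) powr (1 - p) * I powr p"
      using ab z by (simp add: z_def powr_divide powr_diff field_simps)
    finally show ?thesis
      using ab by (simp add: I_def powr_diff field_simps)
  qed
qed

section \<open>Gradients and test functions\<close>

lemma has_derivative_grad:
  assumes "\<phi> differentiable (at x)"
  shows "(\<phi> has_derivative (\<lambda>v. grad \<phi> x \<bullet> v)) (at x)"
proof -
  let ?D = "frechet_derivative \<phi> (at x)"
  have D: "(\<phi> has_derivative ?D) (at x)"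
    using assms frechet_derivative_works by blast
  then have lin: "linear ?D"
    using has_derivative_linear by blast
  have "?D v = grad \<phi> x \<bullet> v" for v
  proof (cases v)
    case (Pair a b)
    have "?D (a, b) = ?D (a *\<^sub>R (1, 0) + b *\<^sub>R (0, 1))"
      by simp
    also have "\<dots> = a * ?D (1, 0) + b * ?D (0, 1)"
      by (simp only: linear_add[OF lin] linear_cmul[OF lin] real_scaleR_def)
    finally show ?thesis
      by (simp add: Pair grad_def inner_prod_def)
  qed
  then have "?D = (\<lambda>v. grad \<phi> x \<bullet> v)"
    by (simp add: fun_eq_iff)
  with D show ?thesis
    by simp
qed

lemma grad_eqI:
  assumes "(\<phi> has_derivative D) (at x)"
  shows "grad \<phi> x = (D (1, 0), D (0, 1))"
  using frechet_derivative_at[OF assms] by (simp add: grad_def)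

lemma grad_eq_0_outside_support:
  assumes "x \<notin> closure {x. \<phi> x \<noteq> 0}"
  shows "grad \<phi> x = 0"
proof -
  have "(\<phi> has_derivative (\<lambda>_. 0)) (at x)"
  proof (rule has_derivative_transform_within_open[OF has_derivative_const])
    show "open (- closure {x. \<phi> x \<noteq> 0})"
      by (intro open_Compl closed_closure)
    show "x \<in> - closure {x. \<phi> x \<noteq> 0}"
      using assms by simp
    fix y
    assume "y \<in> - closure {x. \<phi> x \<noteq> 0}"
    then show "0 = \<phi> y"
      using closure_subset[of "{x. \<phi> x \<noteq> 0}"] by (auto simp del: Compl_iff)
  qed
  from grad_eqI[OF this] show ?thesis
    by (simp add: zero_prod_def)
qed

lemma abs_diff_le_integral_grad:
  fixes \<phi> :: "real \<times> real \<Rightarrow> real"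
  assumes dif: "\<And>y. \<phi> differentiable (at y)" and cont: "continuous_on UNIV (grad \<phi>)"
    and n: "norm n = 1" and r: "r > 0"
  shows "\<bar>\<phi> x - \<phi> (x - r *\<^sub>R n)\<bar> \<le> integral {0..r} (\<lambda>s. norm (grad \<phi> (x - s *\<^sub>R n)))"
proof -
  let ?g = "\<lambda>s. grad \<phi> (x - s *\<^sub>R n) \<bullet> (- n)"
  have "((\<lambda>s. \<phi> (x - s *\<^sub>R n)) has_vector_derivative ?g s) (at s within {0..r})" for s
  proof -
    have "((\<lambda>s. x - s *\<^sub>R n) has_derivative (\<lambda>t. - (t *\<^sub>R n))) (at s)"
      by (auto intro!: derivative_eq_intros)
    from has_derivative_compose[OF this has_derivative_grad[OF dif]]
    show ?thesis
      unfolding has_vector_derivative_def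
      by (auto intro: has_derivative_at_withinI simp: inner_scaleR_right)
  qed
  then have "(?g has_integral (\<phi> (x - r *\<^sub>R n) - \<phi> x)) {0..r}"
    using r fundamental_theorem_of_calculus[of 0 r "\<lambda>s. \<phi> (x - s *\<^sub>R n)" ?g] by simp
  then have eq: "integral {0..r} ?g = \<phi> (x - r *\<^sub>R n) - \<phi> x" and int: "?g integrable_on {0..r}"
    by (auto intro: integral_unique has_integral_integrable simp del: inner_minus_right)
  have "norm (integral {0..r} ?g) \<le> integral {0..r} (\<lambda>s. norm (grad \<phi> (x - s *\<^sub>R n)))"
  proof (rule integral_norm_bound_integral[OF int])
    show "(\<lambda>s. norm (grad \<phi> (x - s *\<^sub>R n))) integrable_on {0..r}"
      by (intro integrable_continuous_interval continuous_on_norm continuous_on_compose2[OF cont])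
         (auto intro!: continuous_intros)
    show "norm (?g s) \<le> norm (grad \<phi> (x - s *\<^sub>R n))" for s
      using Cauchy_Schwarz_ineq2[of "grad \<phi> (x - s *\<^sub>R n)" "- n"] n by simp
  qed
  then show ?thesis
    using eq by (simp add: abs_minus_commute)
qed

lemma abs_powr_le_segment_integral:
  fixes \<phi> :: "real \<times> real \<Rightarrow> real"
  assumes dif: "\<And>y. \<phi> differentiable (at y)" and cont: "continuous_on UNIV (grad \<phi>)"
    and n: "norm n = 1" and r: "r > 0" and p: "p \<ge> 1"
    and vanish: "\<phi> (x - r *\<^sub>R n) = 0"
  shows "\<bar>\<phi> x\<bar> powr p \<le> r powr (p - 1) * integral {0..r} (\<lambda>s. norm (grad \<phi> (x - s *\<^sub>R n)) powr p)"
proof -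
  have "\<bar>\<phi> x\<bar> powr p \<le> integral {0..r} (\<lambda>s. norm (grad \<phi> (x - s *\<^sub>R n))) powr p"
    using abs_diff_le_integral_grad[OF dif cont n r, of x] vanish p by (intro powr_mono2) auto
  also have "\<dots> \<le> r powr (p - 1) * integral {0..r} (\<lambda>s. norm (grad \<phi> (x - s *\<^sub>R n)) powr p)"
    using powr_integral_le[of 0 r "\<lambda>s. norm (grad \<phi> (x - s *\<^sub>R n))" p] r p
    by (simp add: continuous_on_norm continuous_on_compose2[OF cont] continuous_intros)
  finally show ?thesis .
qed

lemma Cc1D:
  assumes "\<phi> \<in> Cc1 \<Omega>"
  shows "\<And>x. \<phi> differentiable (at x)" "continuous_on UNIV (grad \<phi>)"
    "compact (closure {x. \<phi> x \<noteq> 0})" "closure {x. \<phi> x \<noteq> 0} \<subseteq> \<Omega>"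
  using assms unfolding Cc1_def by auto

lemma continuous_on_Cc1: "\<phi> \<in> Cc1 \<Omega> \<Longrightarrow> continuous_on UNIV \<phi>"
  using Cc1D(1) continuous_at_imp_continuous_on differentiable_imp_continuous_within by blast

lemma Cc1_nonzero_imp_mem: "\<phi> \<in> Cc1 \<Omega> \<Longrightarrow> \<phi> x \<noteq> 0 \<Longrightarrow> x \<in> \<Omega>"
  using Cc1D(4)[of \<phi> \<Omega>] closure_subset[of "{x. \<phi> x \<noteq> 0}"] by auto

lemma integrable_vanishing_outside_compact:
  fixes f :: "'a::euclidean_space \<Rightarrow> real"
  assumes "continuous_on UNIV f" "compact K" "\<And>x. x \<notin> K \<Longrightarrow> f x = 0"
  shows "integrable lborel f"
proof -
  have "integrable lborel (\<lambda>x. indicat_real K x *\<^sub>R f x)"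
    using assms by (intro borel_integrable_compact) (auto intro: continuous_on_subset)
  also have "(\<lambda>x. indicat_real K x *\<^sub>R f x) = f"
    using assms(3) by (auto simp: indicator_def fun_eq_iff)
  finally show ?thesis .
qed

lemma continuous_on_norm_grad_powr:
  "\<phi> \<in> Cc1 \<Omega> \<Longrightarrow> p > 0 \<Longrightarrow> continuous_on UNIV (\<lambda>x. norm (grad \<phi> x) powr p)"
  by (intro continuous_on_powr' continuous_on_norm Cc1D(2)) (auto intro: continuous_on_const)

lemma Cc1_integrable:
  assumes \<phi>: "\<phi> \<in> Cc1 \<Omega>" and p: "p > 0"
  shows "integrable lborel (\<lambda>x. \<bar>\<phi> x\<bar> powr p)"
    and "integrable lborel (\<lambda>x. norm (grad \<phi> x) powr p)"
proof -
  have "continuous_on UNIV (\<lambda>x. \<bar>\<phi> x\<bar> powr p)"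
    using continuous_on_Cc1[OF \<phi>] p
    by (intro continuous_on_powr' continuous_on_rabs) (auto intro: continuous_on_const)
  then show "integrable lborel (\<lambda>x. \<bar>\<phi> x\<bar> powr p)"
    using closure_subset[of "{x. \<phi> x \<noteq> 0}"] p
    by (intro integrable_vanishing_outside_compact[OF _ Cc1D(3)[OF \<phi>]]) auto
  show "integrable lborel (\<lambda>x. norm (grad \<phi> x) powr p)"
    using continuous_on_norm_grad_powr[OF \<phi> p] grad_eq_0_outside_support p
    by (intro integrable_vanishing_outside_compact[OF _ Cc1D(3)[OF \<phi>]]) auto
qed

section \<open>A Poincare inequality from exit directions\<close>

lemma nn_integral_lborel_translate:
  fixes g :: "'a::euclidean_space \<Rightarrow> ennreal"
  assumes "g \<in> borel_measurable borel"
  shows "(\<integral>\<^sup>+x. g (x - c) \<partial>lborel) = (\<integral>\<^sup>+x. g x \<partial>lborel)"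
proof -
  have "(\<integral>\<^sup>+x. g x \<partial>lborel) = (\<integral>\<^sup>+x. g x \<partial>distr lborel borel ((+) (- c)))"
    by (simp add: lborel_distr_plus)
  also have "\<dots> = (\<integral>\<^sup>+x. g (- c + x) \<partial>lborel)"
    using assms by (subst nn_integral_distr) auto
  finally show ?thesis
    by simp
qed

lemma borel_measurable_segment_integrand:
  fixes G :: "'a::euclidean_space \<Rightarrow> real"
  assumes "continuous_on UNIV G"
  shows "(\<lambda>(x, s). ennreal (indicator {0..r} s * G (x - s *\<^sub>R n))) \<in> borel_measurable (lborel \<Otimes>\<^sub>M lborel)"
proof -
  have "continuous_on UNIV (\<lambda>z::'a \<times> real. G (fst z - snd z *\<^sub>R n))"
    by (intro continuous_on_compose2[OF assms] continuous_intros) auto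
  then have "(\<lambda>z::'a \<times> real. G (fst z - snd z *\<^sub>R n)) \<in> borel_measurable borel"
    by (rule borel_measurable_continuous_onI)
  moreover have "(\<lambda>z::'a \<times> real. indicator {0..r} (snd z) :: real) = indicator (UNIV \<times> {0..r})"
    by (auto simp: indicator_def fun_eq_iff)
  then have "(\<lambda>z::'a \<times> real. indicator {0..r} (snd z) :: real) \<in> borel_measurable borel"
    by (metis borel_closed borel_measurable_indicator closed_Times closed_atLeastAtMost closed_UNIV)
  ultimately have "(\<lambda>z::'a \<times> real. ennreal (indicator {0..r} (snd z) * G (fst z - snd z *\<^sub>R n)))
      \<in> borel_measurable borel"
    by (intro measurable_compose[OF borel_measurable_times measurable_ennreal])
  then show ?thesis
    by (simp add: lborel_prod measurable_lborel2 case_prod_unfold)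
qed

lemma nn_integral_segment_integral:
  fixes G :: "'a::euclidean_space \<Rightarrow> real"
  assumes cont: "continuous_on UNIV G" and r: "r \<ge> 0"
  shows "(\<integral>\<^sup>+x. (\<integral>\<^sup>+s. ennreal (indicator {0..r} s * G (x - s *\<^sub>R n)) \<partial>lborel) \<partial>lborel)
         = ennreal r * (\<integral>\<^sup>+x. ennreal (G x) \<partial>lborel)"
proof -
  have [measurable]: "G \<in> borel_measurable borel"
    using cont by (rule borel_measurable_continuous_onI)
  have "(\<integral>\<^sup>+x. (\<integral>\<^sup>+s. ennreal (indicator {0..r} s * G (x - s *\<^sub>R n)) \<partial>lborel) \<partial>lborel)
      = (\<integral>\<^sup>+s. (\<integral>\<^sup>+x. ennreal (indicator {0..r} s * G (x - s *\<^sub>R n)) \<partial>lborel) \<partial>lborel)"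
    using lborel_pair.Fubini'[OF borel_measurable_segment_integrand[OF cont]] by simp
  also have "\<dots> = (\<integral>\<^sup>+s. ennreal (indicator {0..r} s) * (\<integral>\<^sup>+x. ennreal (G x) \<partial>lborel) \<partial>lborel)"
  proof (rule nn_integral_cong)
    fix s :: real
    have "(\<integral>\<^sup>+x. ennreal (indicator {0..r} s * G (x - s *\<^sub>R n)) \<partial>lborel)
        = ennreal (indicator {0..r} s) * (\<integral>\<^sup>+x. ennreal (G (x - s *\<^sub>R n)) \<partial>lborel)"
      by (subst nn_integral_cmult[symmetric]) (auto simp: indicator_def intro!: nn_integral_cong)
    then show "(\<integral>\<^sup>+x. ennreal (indicator {0..r} s * G (x - s *\<^sub>R n)) \<partial>lborel)
        = ennreal (indicator {0..r} s) * (\<integral>\<^sup>+x. ennreal (G x) \<partial>lborel)"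
      by (simp add: nn_integral_lborel_translate[where g = "\<lambda>x. ennreal (G x)"])
  qed
  also have "\<dots> = (\<integral>\<^sup>+x. ennreal (G x) \<partial>lborel) * emeasure lborel {0..r}"
    by (subst mult.commute) (simp add: ennreal_indicator nn_integral_cmult_indicator)
  also have "\<dots> = ennreal r * (\<integral>\<^sup>+x. ennreal (G x) \<partial>lborel)"
    using r by (simp add: mult.commute)
  finally show ?thesis .
qed

text \<open>\<open>|\<phi> x|\<^sup>p\<close> is bounded by the energy along a segment through x that leaves \<Omega>; integrating
  in x turns each segment integral into r times the total energy.\<close>
lemma Poincare_exit_directions:
  fixes \<Omega> D :: "(real \<times> real) set"
  assumes D: "finite D" "\<And>n. n \<in> D \<Longrightarrow> norm n = 1" and r: "r > 0" and p: "p \<ge> 1"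
    and exit: "\<And>x. x \<in> \<Omega> \<Longrightarrow> \<exists>n\<in>D. x - r *\<^sub>R n \<notin> \<Omega>"
    and \<phi>: "\<phi> \<in> Cc1 \<Omega>"
  shows "(\<integral>x. \<bar>\<phi> x\<bar> powr p \<partial>lborel) \<le> card D * r powr p * (\<integral>x. norm (grad \<phi> x) powr p \<partial>lborel)"
proof -
  define G where "G x = norm (grad \<phi> x) powr p" for x
  define J where "J n x = (\<integral>\<^sup>+s. ennreal (indicator {0..r} s * G (x - s *\<^sub>R n)) \<partial>lborel)" for n x
  define c where "c = ennreal (r powr (p - 1))"
  have cont_G: "continuous_on UNIV G"
    unfolding G_def using continuous_on_norm_grad_powr[OF \<phi>] p by simp
  have int_G: "integrable lborel G"
    unfolding G_def using Cc1_integrable(2)[OF \<phi>] p by simp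
  have G_nonneg: "(\<integral>x. G x \<partial>lborel) \<ge> 0"
    unfolding G_def by (intro integral_nonneg_AE) auto
  have int_segment: "(\<lambda>s. G (x - s *\<^sub>R n)) integrable_on {0..r}" for n x
    by (intro integrable_continuous_interval continuous_on_compose2[OF cont_G] continuous_intros) auto
  have J_eq: "J n x = ennreal (integral {0..r} (\<lambda>s. G (x - s *\<^sub>R n)))" for n x
  proof -
    have "((\<lambda>s. G (x - s *\<^sub>R n)) has_integral integral {0..r} (\<lambda>s. G (x - s *\<^sub>R n))) {0..r}"
      using int_segment by (rule integrable_integral)
    then show ?thesis
      unfolding J_def by (subst nn_integral_has_integral_lebesgue) (auto simp: G_def)
  qed
  have pointwise: "ennreal (\<bar>\<phi> x\<bar> powr p) \<le> c * (\<Sum>n\<in>D. J n x)" for x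
  proof (cases "\<phi> x = 0")
    case False
    then obtain n where n: "n \<in> D" "x - r *\<^sub>R n \<notin> \<Omega>"
      using exit[OF Cc1_nonzero_imp_mem[OF \<phi>]] by blast
    then have "\<phi> (x - r *\<^sub>R n) = 0"
      using Cc1_nonzero_imp_mem[OF \<phi>, of "x - r *\<^sub>R n"] by auto
    then have "\<bar>\<phi> x\<bar> powr p \<le> r powr (p - 1) * integral {0..r} (\<lambda>s. G (x - s *\<^sub>R n))"
      unfolding G_def using abs_powr_le_segment_integral[OF Cc1D(1,2)[OF \<phi>] D(2)[OF n(1)] r p] by blast
    then have "ennreal (\<bar>\<phi> x\<bar> powr p) \<le> ennreal (r powr (p - 1) * integral {0..r} (\<lambda>s. G (x - s *\<^sub>R n)))"
      by (rule ennreal_leI)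
    also have "\<dots> = c * J n x"
      using int_segment by (simp add: J_eq c_def ennreal_mult integral_nonneg G_def)
    also have "\<dots> \<le> c * (\<Sum>n\<in>D. J n x)"
      using D(1) n(1) by (intro mult_left_mono member_le_sum) auto
    finally show ?thesis .
  qed (use p in simp)
  have int_J: "(\<integral>\<^sup>+x. J n x \<partial>lborel) = ennreal (r * (\<integral>x. G x \<partial>lborel))" for n
    unfolding J_def nn_integral_segment_integral[OF cont_G less_imp_le[OF r]]
    using int_G r by (subst nn_integral_eq_integral) (auto simp: G_def ennreal_mult)
  have meas_J: "J n \<in> borel_measurable lborel" for n
    unfolding J_def using borel_measurable_segment_integrand[OF cont_G]
    by (intro lborel.borel_measurable_nn_integral) (simp add: case_prod_unfold)
  have "ennreal (\<integral>x. \<bar>\<phi> x\<bar> powr p \<partial>lborel) = (\<integral>\<^sup>+x. ennreal (\<bar>\<phi> x\<bar> powr p) \<partial>lborel)"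
    using Cc1_integrable(1)[OF \<phi>] p by (intro nn_integral_eq_integral[symmetric]) auto
  also have "\<dots> \<le> (\<integral>\<^sup>+x. c * (\<Sum>n\<in>D. J n x) \<partial>lborel)"
    by (intro nn_integral_mono pointwise)
  also have "\<dots> = c * (\<Sum>n\<in>D. \<integral>\<^sup>+x. J n x \<partial>lborel)"
    using meas_J by (simp add: nn_integral_cmult nn_integral_sum)
  also have "\<dots> = ennreal (r powr (p - 1) * (card D * (r * (\<integral>x. G x \<partial>lborel))))"
    using r G_nonneg by (simp add: int_J c_def ennreal_mult ennreal_of_nat_eq_real_of_nat)
  also have "r powr (p - 1) * (card D * (r * (\<integral>x. G x \<partial>lborel))) = card D * r powr p * (\<integral>x. G x \<partial>lborel)"
    using r by (simp add: powr_diff field_simps)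
  finally show ?thesis
    using r G_nonneg by (simp add: ennreal_le_iff G_def)
qed

lemma integral_powr_le_weighted:
  fixes a b c :: "'a \<Rightarrow> real"
  assumes int: "integrable M (\<lambda>x. a x powr p)" "integrable M (\<lambda>x. b x powr p)" "integrable M (\<lambda>x. c x powr p)"
    and le: "\<And>x. a x \<le> b x + c x" and nonneg: "\<And>x. 0 \<le> a x" "\<And>x. 0 \<le> b x" "\<And>x. 0 \<le> c x"
    and t: "0 < t" "t < 1" and p: "p \<ge> 1"
  shows "(\<integral>x. a x powr p \<partial>M)
    \<le> t powr (1 - p) * (\<integral>x. b x powr p \<partial>M) + (1 - t) powr (1 - p) * (\<integral>x. c x powr p \<partial>M)"
proof -
  have "a x powr p \<le> t powr (1 - p) * b x powr p + (1 - t) powr (1 - p) * c x powr p" for x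
  proof -
    have "a x powr p \<le> (b x + c x) powr p"
      using le nonneg p by (intro powr_mono2) auto
    also have "\<dots> \<le> t powr (1 - p) * b x powr p + (1 - t) powr (1 - p) * c x powr p"
      using nonneg t p by (intro powr_add_le_weighted) auto
    finally show ?thesis .
  qed
  then have "(\<integral>x. a x powr p \<partial>M) \<le> (\<integral>x. t powr (1 - p) * b x powr p + (1 - t) powr (1 - p) * c x powr p \<partial>M)"
    using int by (intro integral_mono) auto
  also have "\<dots> = t powr (1 - p) * (\<integral>x. b x powr p \<partial>M) + (1 - t) powr (1 - p) * (\<integral>x. c x powr p \<partial>M)"
    using int by simp
  finally show ?thesis .
qed

text \<open>Since \<open>x \<mapsto> x\<^sup>p\<close> is not subadditive, the triangle inequality is used in the weighted
  form with weight t when passing to the limit along the approximating test functions, and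
  t \<rightarrow> 1 at the very end.\<close>
lemma Poincare_W01p:
  assumes p: "p \<ge> 1" and C: "C \<ge> 0"
    and Poincare: "\<And>\<phi>. \<phi> \<in> Cc1 \<Omega> \<Longrightarrow>
      (\<integral>x. \<bar>\<phi> x\<bar> powr p \<partial>lborel) \<le> C * (\<integral>x. norm (grad \<phi> x) powr p \<partial>lborel)"
    and W: "W01p \<Omega> p u g"
  shows "(\<integral>x. \<bar>u x\<bar> powr p \<partial>lborel) \<le> C * (\<integral>x. norm (g x) powr p \<partial>lborel)"
proof -
  obtain \<phi> where \<phi>: "\<And>n. \<phi> n \<in> Cc1 \<Omega>"
    and int_e: "\<And>n. integrable lborel (\<lambda>x. \<bar>\<phi> n x - u x\<bar> powr p)"
    and int_f: "\<And>n. integrable lborel (\<lambda>x. norm (grad (\<phi> n) x - g x) powr p)"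
    and lim_e: "(\<lambda>n. \<integral>x. \<bar>\<phi> n x - u x\<bar> powr p \<partial>lborel) \<longlonglongrightarrow> 0"
    and lim_f: "(\<lambda>n. \<integral>x. norm (grad (\<phi> n) x - g x) powr p \<partial>lborel) \<longlonglongrightarrow> 0"
    and int_u: "integrable lborel (\<lambda>x. \<bar>u x\<bar> powr p)"
    and int_g: "integrable lborel (\<lambda>x. norm (g x) powr p)"
    using W unfolding W01p_def by blast
  define U where "U = (\<integral>x. \<bar>u x\<bar> powr p \<partial>lborel)"
  define G where "G = (\<integral>x. norm (g x) powr p \<partial>lborel)"
  define e where "e n = (\<integral>x. \<bar>\<phi> n x - u x\<bar> powr p \<partial>lborel)" for n
  define f where "f n = (\<integral>x. norm (grad (\<phi> n) x - g x) powr p \<partial>lborel)" for n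
  have bound: "U \<le> t powr (1 - p) * (C * (t powr (1 - p) * G))" if t: "0 < t" "t < 1" for t
  proof -
    define A where "A = t powr (1 - p)"
    define B where "B = (1 - t) powr (1 - p)"
    have "U \<le> A * (C * (A * G + B * f n)) + B * e n" for n
    proof -
      have "U \<le> A * (\<integral>x. \<bar>\<phi> n x\<bar> powr p \<partial>lborel) + B * e n"
        unfolding U_def e_def A_def B_def using t p Cc1_integrable(1)[OF \<phi>] int_u int_e
        by (intro integral_powr_le_weighted) auto
      moreover have "(\<integral>x. norm (grad (\<phi> n) x) powr p \<partial>lborel) \<le> A * G + B * f n"
        unfolding G_def f_def A_def B_def using t p Cc1_integrable(2)[OF \<phi>] int_g int_f
        by (intro integral_powr_le_weighted) (auto intro: norm_triangle_sub)
      then have "(\<integral>x. \<bar>\<phi> n x\<bar> powr p \<partial>lborel) \<le> C * (A * G + B * f n)"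
        using Poincare[OF \<phi>] C by (meson mult_left_mono order_trans)
      then have "A * (\<integral>x. \<bar>\<phi> n x\<bar> powr p \<partial>lborel) \<le> A * (C * (A * G + B * f n))"
        by (rule mult_left_mono) (simp add: A_def)
      ultimately show ?thesis
        by linarith
    qed
    moreover have "(\<lambda>n. A * (C * (A * G + B * f n)) + B * e n) \<longlonglongrightarrow> A * (C * (A * G + B * 0)) + B * 0"
      using lim_e lim_f unfolding e_def f_def by (intro tendsto_intros)
    ultimately have "U \<le> A * (C * (A * G + B * 0)) + B * 0"
      by (intro LIMSEQ_le_const) auto
    then show ?thesis
      unfolding A_def by simp
  qed
  have "\<forall>\<^sub>F t in at_left 1. t \<in> {0<..<1::real}"
    by (rule eventually_at_left_real) simp
  then have "\<forall>\<^sub>F t in at_left 1. U \<le> t powr (1 - p) * (C * (t powr (1 - p) * G))"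
    by eventually_elim (auto intro: bound)
  moreover have "((\<lambda>t. t powr (1 - p) * (C * (t powr (1 - p) * G))) \<longlongrightarrow> 1 powr (1 - p) * (C * (1 powr (1 - p) * G))) (at_left 1)"
    by (intro tendsto_intros) auto
  ultimately have "U \<le> 1 powr (1 - p) * (C * (1 powr (1 - p) * G))"
    by (intro tendsto_le[OF _ _ tendsto_const]) auto
  then show ?thesis
    unfolding U_def G_def by simp
qed

section \<open>Bounds for the first eigenvalue\<close>

definition lambda1_candidates :: "(real \<times> real) set \<Rightarrow> real \<Rightarrow> real set" where
  "lambda1_candidates \<Omega> p = {(\<integral>x. norm (g x) powr p \<partial>lborel) | u g.
      W01p \<Omega> p u g \<and> (\<integral>x. \<bar>u x\<bar> powr p \<partial>lborel) = 1}"

lemma lambda1_eq_Inf_candidates: "lambda1 \<Omega> p = Inf (lambda1_candidates \<Omega> p)"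
  unfolding lambda1_def lambda1_candidates_def ..

lemma lambda1_candidates_nonneg: "z \<in> lambda1_candidates \<Omega> p \<Longrightarrow> z \<ge> 0"
  unfolding lambda1_candidates_def by (auto intro!: integral_nonneg_AE)

lemma bdd_below_lambda1_candidates: "bdd_below (lambda1_candidates \<Omega> p)"
  using lambda1_candidates_nonneg by (rule bdd_belowI)

lemma grad_cmult:
  assumes "\<phi> differentiable (at x)"
  shows "grad (\<lambda>x. a * \<phi> x) x = a *\<^sub>R grad \<phi> x"
  using grad_eqI[OF has_derivative_mult_right[OF has_derivative_grad[OF assms], of a]]
  by (simp add: inner_prod_def scaleR_prod_def)

lemma Cc1_cmult:
  assumes \<phi>: "\<phi> \<in> Cc1 \<Omega>" and a: "a \<noteq> 0"
  shows "(\<lambda>x. a * \<phi> x) \<in> Cc1 \<Omega>"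
proof -
  have "(\<lambda>x. a * \<phi> x) differentiable (at x)" for x
    using Cc1D(1)[OF \<phi>] by (intro differentiable_mult) auto
  moreover have "grad (\<lambda>x. a * \<phi> x) = (\<lambda>x. a *\<^sub>R grad \<phi> x)"
    using grad_cmult[OF Cc1D(1)[OF \<phi>]] by (simp add: fun_eq_iff)
  then have "continuous_on UNIV (grad (\<lambda>x. a * \<phi> x))"
    using Cc1D(2)[OF \<phi>] by (simp add: continuous_on_scaleR continuous_on_const)
  moreover have "{x. a * \<phi> x \<noteq> 0} = {x. \<phi> x \<noteq> 0}"
    using a by simp
  ultimately show ?thesis
    using Cc1D(3,4)[OF \<phi>] unfolding Cc1_def by simp
qed

lemma W01p_Cc1:
  assumes \<phi>: "\<phi> \<in> Cc1 \<Omega>" and p: "p > 0"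
  shows "W01p \<Omega> p \<phi> (grad \<phi>)"
proof -
  have "\<phi> \<in> borel_measurable lborel" "grad \<phi> \<in> borel_measurable lborel"
    using continuous_on_Cc1[OF \<phi>] Cc1D(2)[OF \<phi>] by (simp_all add: borel_measurable_continuous_onI)
  then show ?thesis
    unfolding W01p_def using Cc1_integrable[OF \<phi> p] \<phi> by (intro conjI exI[of _ "\<lambda>n. \<phi>"]) auto
qed

lemma Rayleigh_quotient_mem_lambda1_candidates:
  assumes \<phi>: "\<phi> \<in> Cc1 \<Omega>" and p: "p > 0" and pos: "(\<integral>x. \<bar>\<phi> x\<bar> powr p \<partial>lborel) > 0"
  shows "(\<integral>x. norm (grad \<phi> x) powr p \<partial>lborel) / (\<integral>x. \<bar>\<phi> x\<bar> powr p \<partial>lborel) \<in> lambda1_candidates \<Omega> p"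
proof -
  define N where "N = (\<integral>x. \<bar>\<phi> x\<bar> powr p \<partial>lborel)"
  define a where "a = N powr (- 1 / p)"
  have N: "N > 0"
    using pos by (simp add: N_def)
  then have a: "a > 0"
    by (simp add: a_def)
  have "a powr p = N powr (- 1)"
    using p by (simp add: a_def powr_powr)
  then have a_powr: "a powr p = 1 / N"
    using N by (simp add: powr_minus_divide)
  have \<psi>: "(\<lambda>x. a * \<phi> x) \<in> Cc1 \<Omega>"
    using Cc1_cmult[OF \<phi>] a by simp
  have "(\<integral>x. \<bar>a * \<phi> x\<bar> powr p \<partial>lborel) = 1"
    using a a_powr N by (simp add: abs_mult powr_mult N_def)
  moreover have "(\<integral>x. norm (grad (\<lambda>x. a * \<phi> x) x) powr p \<partial>lborel)
      = (\<integral>x. norm (grad \<phi> x) powr p \<partial>lborel) / N"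
    using a a_powr by (simp add: grad_cmult[OF Cc1D(1)[OF \<phi>]] powr_mult)
  ultimately show ?thesis
    unfolding lambda1_candidates_def N_def using W01p_Cc1[OF \<psi> p]
    by (auto intro!: exI[of _ "\<lambda>x. a * \<phi> x"] exI[of _ "grad (\<lambda>x. a * \<phi> x)"])
qed

lemma lambda1_ge_Poincare:
  assumes ne: "lambda1_candidates \<Omega> p \<noteq> {}" and p: "p \<ge> 1" and C: "C > 0"
    and Poincare: "\<And>\<phi>. \<phi> \<in> Cc1 \<Omega> \<Longrightarrow>
      (\<integral>x. \<bar>\<phi> x\<bar> powr p \<partial>lborel) \<le> C * (\<integral>x. norm (grad \<phi> x) powr p \<partial>lborel)"
  shows "1 / C \<le> lambda1 \<Omega> p"
  unfolding lambda1_eq_Inf_candidates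
proof (rule cInf_greatest[OF ne])
  fix z
  assume "z \<in> lambda1_candidates \<Omega> p"
  then obtain u g where W: "W01p \<Omega> p u g" and u: "(\<integral>x. \<bar>u x\<bar> powr p \<partial>lborel) = 1"
    and z: "z = (\<integral>x. norm (g x) powr p \<partial>lborel)"
    unfolding lambda1_candidates_def by blast
  have "(\<integral>x. \<bar>u x\<bar> powr p \<partial>lborel) \<le> C * (\<integral>x. norm (g x) powr p \<partial>lborel)"
    by (rule Poincare_W01p[OF p _ Poincare W]) (use C in simp)
  with u z have "1 \<le> C * z"
    by simp
  then show "1 / C \<le> z"
    using C by (simp add: field_simps)
qed

section \<open>Smoothed cones\<close>

lemma has_real_derivative_glue:
  fixes f g h :: "real \<Rightarrow> real"
  assumes f: "(f has_real_derivative D) (at x0)" and g: "(g has_real_derivative D) (at x0)"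
    and left: "\<And>y. y \<le> x0 \<Longrightarrow> h y = f y" and right: "\<And>y. y \<ge> x0 \<Longrightarrow> h y = g y"
  shows "(h has_real_derivative D) (at x0)"
proof -
  have "((\<lambda>y. (f y - f x0) / (y - x0)) \<longlongrightarrow> D) (at_left x0)"
    using f unfolding has_field_derivative_iff by (rule tendsto_mono[OF at_le, rotated]) simp
  moreover have "\<forall>\<^sub>F y in at_left x0. (f y - f x0) / (y - x0) = (h y - h x0) / (y - x0)"
    using eventually_at_left_real[of "x0 - 1" x0, simplified] by eventually_elim (simp add: left)
  ultimately have "((\<lambda>y. (h y - h x0) / (y - x0)) \<longlongrightarrow> D) (at_left x0)"
    by (rule tendsto_cong[THEN iffD1, rotated])
  moreover have "((\<lambda>y. (g y - g x0) / (y - x0)) \<longlongrightarrow> D) (at_right x0)"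
    using g unfolding has_field_derivative_iff by (rule tendsto_mono[OF at_le, rotated]) simp
  moreover have "\<forall>\<^sub>F y in at_right x0. (g y - g x0) / (y - x0) = (h y - h x0) / (y - x0)"
    using eventually_at_right_real[of x0 "x0 + 1", simplified] by eventually_elim (simp add: right)
  ultimately show ?thesis
    unfolding has_field_derivative_iff filterlim_at_split
    by (auto elim: tendsto_cong[THEN iffD1, rotated])
qed

text \<open>A \<open>C\<^sup>1\<close> approximation of \<open>\<sigma> \<mapsto> (R - \<sigma>)\<^sup>+\<close> from below: the correction term makes the
  slope vanish at \<open>\<sigma> = R\<close> while costing at most R/(m+1).\<close>
definition cone_profile :: "real \<Rightarrow> nat \<Rightarrow> real \<Rightarrow> real" where
  "cone_profile R m \<sigma> = (if \<sigma> \<le> R then R - \<sigma> + R / Suc m * ((\<sigma> / R) ^ Suc m - 1) else 0)"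

definition cone_profile_deriv :: "real \<Rightarrow> nat \<Rightarrow> real \<Rightarrow> real" where
  "cone_profile_deriv R m \<sigma> = (if \<sigma> \<le> R then (\<sigma> / R) ^ m - 1 else 0)"

lemma has_real_derivative_cone_profile:
  assumes R: "R > 0"
  shows "(cone_profile R m has_real_derivative cone_profile_deriv R m \<sigma>) (at \<sigma>)"
proof -
  define f where "f \<sigma> = R - \<sigma> + R / Suc m * ((\<sigma> / R) ^ Suc m - 1)" for \<sigma>
  have f: "(f has_real_derivative ((\<sigma> / R) ^ m - 1)) (at \<sigma>)" for \<sigma>
  proof -
    define a where "a = R / Suc m / R ^ Suc m"
    have "f = (\<lambda>\<sigma>. R - \<sigma> + a * \<sigma> ^ Suc m - R / Suc m)"
      by (simp add: fun_eq_iff f_def a_def power_divide right_diff_distrib)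
    moreover have "((\<lambda>\<sigma>. R - \<sigma> + a * \<sigma> ^ Suc m - R / Suc m) has_real_derivative
        (0 - 1 + a * (Suc m * \<sigma> ^ m) - 0)) (at \<sigma>)"
      using DERIV_pow[of "Suc m" \<sigma>] by (intro derivative_intros DERIV_cmult) simp
    moreover have "a * (Suc m * \<sigma> ^ m) = (\<sigma> / R) ^ m"
      using R by (simp add: a_def power_divide del: of_nat_Suc)
    ultimately show ?thesis
      by simp
  qed
  have zero: "((\<lambda>_. 0::real) has_real_derivative 0) (at \<sigma>)" for \<sigma>
    by simp
  consider "\<sigma> < R" | "\<sigma> = R" | "\<sigma> > R"
    by linarith
  then show ?thesis
  proof cases
    case 1
    have "(cone_profile R m has_real_derivative ((\<sigma> / R) ^ m - 1)) (at \<sigma>)"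
    proof (rule has_field_derivative_transform_within_open[OF f, of "{..<R}"])
      show "\<sigma> \<in> {..<R}"
        using 1 by simp
    qed (auto simp: cone_profile_def f_def)
    then show ?thesis
      using 1 by (simp add: cone_profile_deriv_def)
  next
    case 2
    have "(cone_profile R m has_real_derivative 0) (at R)"
    proof (rule has_real_derivative_glue[OF _ zero])
      show "(f has_real_derivative 0) (at R)"
        using f[of R] R by simp
    qed (auto simp: cone_profile_def f_def)
    then show ?thesis
      using 2 R by (simp add: cone_profile_deriv_def)
  next
    case 3
    have "(cone_profile R m has_real_derivative 0) (at \<sigma>)"
    proof (rule has_field_derivative_transform_within_open[OF zero, of "{R<..}"])
      show "\<sigma> \<in> {R<..}"
        using 3 by simp
    qed (auto simp: cone_profile_def)
    then show ?thesis
      using 3 by (simp add: cone_profile_deriv_def)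
  qed
qed

lemma continuous_on_cone_profile_deriv: "R > 0 \<Longrightarrow> continuous_on UNIV (cone_profile_deriv R m)"
  unfolding cone_profile_deriv_def[abs_def]
  by (intro continuous_on_cases_le continuous_intros) auto

lemma abs_cone_profile_deriv_le: "R > 0 \<Longrightarrow> \<sigma> \<ge> 0 \<Longrightarrow> \<bar>cone_profile_deriv R m \<sigma>\<bar> \<le> 1"
  by (auto simp: cone_profile_deriv_def power_le_one)

lemma cone_profile_ge:
  assumes "R > 0" "0 \<le> \<sigma>" "\<sigma> \<le> R"
  shows "R - \<sigma> - R / Suc m \<le> cone_profile R m \<sigma>"
proof -
  have "R / Suc m * (0 - 1) \<le> R / Suc m * ((\<sigma> / R) ^ Suc m - 1)"
    using assms by (intro mult_left_mono) auto
  then show ?thesis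
    using assms by (simp add: cone_profile_def)
qed

text \<open>The distance to c, smoothed at scale \<delta> so that it is differentiable at c.\<close>
definition smooth_dist :: "'a::real_inner \<Rightarrow> real \<Rightarrow> 'a \<Rightarrow> real" where
  "smooth_dist c \<delta> x = sqrt ((x - c) \<bullet> (x - c) + \<delta>\<^sup>2)"

lemma smooth_dist_pos: "\<delta> > 0 \<Longrightarrow> smooth_dist c \<delta> x > 0"
  unfolding smooth_dist_def by (simp add: add_nonneg_pos)

lemma norm_le_smooth_dist: "norm (x - c) \<le> smooth_dist c \<delta> x"
proof -
  have "norm (x - c) = sqrt ((x - c) \<bullet> (x - c))"
    by (simp add: norm_eq_sqrt_inner)
  also have "\<dots> \<le> smooth_dist c \<delta> x"
    unfolding smooth_dist_def by simp
  finally show ?thesis .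
qed

lemma smooth_dist_le:
  assumes "\<delta> > 0"
  shows "smooth_dist c \<delta> x \<le> norm (x - c) + \<delta>"
proof -
  have "(x - c) \<bullet> (x - c) + \<delta>\<^sup>2 \<le> (norm (x - c) + \<delta>)\<^sup>2"
    using assms by (simp add: power2_norm_eq_inner[symmetric] power2_sum)
  then have "smooth_dist c \<delta> x \<le> sqrt ((norm (x - c) + \<delta>)\<^sup>2)"
    unfolding smooth_dist_def by (rule real_sqrt_le_mono)
  also have "\<dots> = norm (x - c) + \<delta>"
    using assms by simp
  finally show ?thesis .
qed

lemma has_derivative_smooth_dist:
  assumes "\<delta> > 0"
  shows "(smooth_dist c \<delta> has_derivative (\<lambda>v. ((x - c) \<bullet> v) / smooth_dist c \<delta> x)) (at x)"
proof -
  define h where "h x = (x - c) \<bullet> (x - c) + \<delta>\<^sup>2" for x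
  have h: "h x > 0"
    unfolding h_def using assms by (simp add: add_nonneg_pos)
  have "(h has_derivative (\<lambda>v. 2 * ((x - c) \<bullet> v))) (at x)"
    unfolding h_def by (auto intro!: derivative_eq_intros simp: inner_commute)
  from has_derivative_compose[OF this DERIV_real_sqrt[OF h, unfolded has_field_derivative_def]]
  have "((\<lambda>x. sqrt (h x)) has_derivative (\<lambda>v. inverse (sqrt (h x)) / 2 * (2 * ((x - c) \<bullet> v)))) (at x)"
    by simp
  moreover have "(\<lambda>v. inverse (sqrt (h x)) / 2 * (2 * ((x - c) \<bullet> v))) = (\<lambda>v. ((x - c) \<bullet> v) / smooth_dist c \<delta> x)"
    by (simp add: fun_eq_iff smooth_dist_def h_def field_simps)
  moreover have "(\<lambda>x. sqrt (h x)) = smooth_dist c \<delta>"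
    by (simp add: fun_eq_iff smooth_dist_def h_def)
  ultimately show ?thesis
    by simp
qed

lemma continuous_on_smooth_dist: "continuous_on UNIV (smooth_dist c \<delta>)"
  unfolding smooth_dist_def[abs_def] by (intro continuous_intros)

definition cone_bump :: "real \<times> real \<Rightarrow> real \<Rightarrow> nat \<Rightarrow> real \<Rightarrow> real \<times> real \<Rightarrow> real" where
  "cone_bump c R m \<delta> x = cone_profile R m (smooth_dist c \<delta> x)"

lemma has_derivative_cone_bump:
  assumes "R > 0" "\<delta> > 0"
  shows "(cone_bump c R m \<delta> has_derivative
    (\<lambda>v. cone_profile_deriv R m (smooth_dist c \<delta> x) * (((x - c) \<bullet> v) / smooth_dist c \<delta> x))) (at x)"
  unfolding cone_bump_def[abs_def]
  using has_derivative_compose[OF has_derivative_smooth_dist[OF assms(2)]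
      has_real_derivative_cone_profile[OF assms(1), unfolded has_field_derivative_def]] .

lemma grad_cone_bump:
  assumes "R > 0" "\<delta> > 0"
  shows "grad (cone_bump c R m \<delta>) x
    = (cone_profile_deriv R m (smooth_dist c \<delta> x) / smooth_dist c \<delta> x) *\<^sub>R (x - c)"
  using grad_eqI[OF has_derivative_cone_bump[OF assms]] by (simp add: inner_prod_def scaleR_prod_def)

lemma norm_grad_cone_bump_le:
  assumes R: "R > 0" and \<delta>: "\<delta> > 0"
  shows "norm (grad (cone_bump c R m \<delta>) x) \<le> 1"
proof -
  define w where "w = smooth_dist c \<delta> x"
  have w: "w > 0" "norm (x - c) \<le> w"
    unfolding w_def using smooth_dist_pos[OF \<delta>] norm_le_smooth_dist by auto
  have "norm (grad (cone_bump c R m \<delta>) x) = \<bar>cone_profile_deriv R m w\<bar> * (norm (x - c) / w)"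
    using w by (simp add: grad_cone_bump[OF R \<delta>] w_def)
  also have "\<dots> \<le> 1 * 1"
    using w abs_cone_profile_deriv_le[OF R, of w m] by (intro mult_mono) auto
  finally show ?thesis
    by simp
qed

lemma cone_bump_support: "closure {x. cone_bump c R m \<delta> x \<noteq> 0} \<subseteq> cball c R"
proof (rule closure_minimal)
  show "{x. cone_bump c R m \<delta> x \<noteq> 0} \<subseteq> cball c R"
  proof
    fix x
    assume "x \<in> {x. cone_bump c R m \<delta> x \<noteq> 0}"
    then have "smooth_dist c \<delta> x \<le> R"
      by (auto simp: cone_bump_def cone_profile_def split: if_splits)
    then show "x \<in> cball c R"
      using norm_le_smooth_dist[of x c \<delta>] by (simp add: dist_norm norm_minus_commute)
  qed
qed simp

lemma cone_bump_Cc1: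
  assumes R: "R > 0" and \<delta>: "\<delta> > 0" and ball: "cball c R \<subseteq> \<Omega>"
  shows "cone_bump c R m \<delta> \<in> Cc1 \<Omega>"
proof -
  have "smooth_dist c \<delta> x \<noteq> 0" for x
    using smooth_dist_pos[OF \<delta>] by (metis less_irrefl)
  then have "continuous_on UNIV (\<lambda>x. cone_profile_deriv R m (smooth_dist c \<delta> x) / smooth_dist c \<delta> x)"
    by (intro continuous_on_divide continuous_on_compose2[OF continuous_on_cone_profile_deriv[OF R]]
        continuous_on_smooth_dist) auto
  then have "continuous_on UNIV (grad (cone_bump c R m \<delta>))"
    unfolding grad_cone_bump[OF R \<delta>, abs_def]
    by (rule continuous_on_scaleR[OF _ continuous_on_diff[OF continuous_on_id continuous_on_const]])
  moreover have "cone_bump c R m \<delta> differentiable (at x)" for x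
    using has_derivative_cone_bump[OF R \<delta>, of c m x] unfolding differentiable_def by blast
  moreover have "compact (closure {x. cone_bump c R m \<delta> x \<noteq> 0})"
    unfolding compact_closure
    by (rule bounded_subset[OF bounded_cball order_trans[OF closure_subset cone_bump_support]])
  ultimately show ?thesis
    unfolding Cc1_def using order_trans[OF cone_bump_support ball] by simp
qed

lemma cone_bump_energy_le:
  assumes R: "R > 0" and \<delta>: "\<delta> > 0" and p: "p > 0"
  shows "(\<integral>x. norm (grad (cone_bump c R m \<delta>) x) powr p \<partial>lborel) \<le> measure lborel (cball c R)"
proof -
  have "(\<integral>x. norm (grad (cone_bump c R m \<delta>) x) powr p \<partial>lborel) \<le> (\<integral>x. indicator (cball c R) x \<partial>lborel)"
  proof (rule integral_mono)
    show "integrable lborel (\<lambda>x. norm (grad (cone_bump c R m \<delta>) x) powr p)"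
      using Cc1_integrable(2)[OF cone_bump_Cc1[OF R \<delta> order_refl] p] .
    show "integrable lborel (indicat_real (cball c R))"
      using emeasure_lborel_cball_finite by (intro integrable_real_indicator) auto
    show "norm (grad (cone_bump c R m \<delta>) x) powr p \<le> indicator (cball c R) x" for x
    proof (cases "x \<in> cball c R")
      case True
      then show ?thesis
        using norm_grad_cone_bump_le[OF R \<delta>] p by (simp add: powr_le1)
    next
      case False
      then show ?thesis
        using grad_eq_0_outside_support cone_bump_support by fastforce
    qed
  qed
  then show ?thesis
    by simp
qed

lemma cone_bump_norm_ge:
  assumes R: "R > 0" and \<delta>: "\<delta> > 0" and p: "p > 0" and M: "R - 2 * \<delta> - R / Suc m > 0"
  shows "(R - 2 * \<delta> - R / Suc m) powr p * measure lborel (ball c \<delta>)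
    \<le> (\<integral>x. \<bar>cone_bump c R m \<delta> x\<bar> powr p \<partial>lborel)"
proof -
  define M where "M = R - 2 * \<delta> - R / Suc m"
  have "(\<integral>x. M powr p * indicator (ball c \<delta>) x \<partial>lborel) \<le> (\<integral>x. \<bar>cone_bump c R m \<delta> x\<bar> powr p \<partial>lborel)"
  proof (rule integral_mono)
    show "integrable lborel (\<lambda>x. M powr p * indicat_real (ball c \<delta>) x)"
      using emeasure_lborel_ball_finite by (intro integrable_mult_right integrable_real_indicator) auto
    show "integrable lborel (\<lambda>x. \<bar>cone_bump c R m \<delta> x\<bar> powr p)"
      using Cc1_integrable(1)[OF cone_bump_Cc1[OF R \<delta> order_refl] p] .
    show "M powr p * indicator (ball c \<delta>) x \<le> \<bar>cone_bump c R m \<delta> x\<bar> powr p" for x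
    proof (cases "x \<in> ball c \<delta>")
      case True
      define w where "w = smooth_dist c \<delta> x"
      have "norm (x - c) < \<delta>"
        using True by (simp add: dist_norm norm_minus_commute)
      then have w: "0 < w" "w < 2 * \<delta>"
        using smooth_dist_pos[OF \<delta>] smooth_dist_le[OF \<delta>, of c x] by (auto simp: w_def)
      moreover have "R / Suc m > 0"
        using R by simp
      ultimately have "M \<le> cone_bump c R m \<delta> x"
        using cone_profile_ge[OF R, of w m] M unfolding cone_bump_def w_def[symmetric] M_def by simp
      then show ?thesis
        using True M p by (simp add: M_def powr_mono2)
    qed simp
  qed
  then show ?thesis
    by (simp add: M_def)
qed

section \<open>The limit \<open>p \<rightarrow> \<infinity>\<close>\<close>

lemma tendsto_powr_inverse_at_top:
  fixes a :: real
  assumes "a > 0"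
  shows "((\<lambda>p. a powr (1 / p)) \<longlongrightarrow> 1) at_top"
proof -
  have "((\<lambda>p::real. a powr (1 / p)) \<longlongrightarrow> a powr 0) at_top"
    using assms tendsto_inverse_0_at_top[OF filterlim_ident] by (intro tendsto_intros) (auto simp: divide_inverse)
  then show ?thesis
    using assms by simp
qed

lemma lambda1_le_cone_bump:
  assumes R: "R > 0" and \<delta>: "\<delta> > 0" and p: "p > 0" and M: "R - 2 * \<delta> - R / Suc m > 0"
    and ball: "cball c R \<subseteq> \<Omega>"
  shows "lambda1 \<Omega> p \<le> measure lborel (cball c R) / ((R - 2 * \<delta> - R / Suc m) powr p * measure lborel (ball c \<delta>))"
proof -
  define \<phi> where "\<phi> = cone_bump c R m \<delta>"
  have \<phi>: "\<phi> \<in> Cc1 \<Omega>"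
    unfolding \<phi>_def using cone_bump_Cc1[OF R \<delta> ball] .
  have lower: "(R - 2 * \<delta> - R / Suc m) powr p * measure lborel (ball c \<delta>) \<le> (\<integral>x. \<bar>\<phi> x\<bar> powr p \<partial>lborel)"
    unfolding \<phi>_def using cone_bump_norm_ge[OF R \<delta> p M] .
  moreover have pos: "(R - 2 * \<delta> - R / Suc m) powr p * measure lborel (ball c \<delta>) > 0"
    using M \<delta> by simp
  ultimately have "lambda1 \<Omega> p \<le> (\<integral>x. norm (grad \<phi> x) powr p \<partial>lborel) / (\<integral>x. \<bar>\<phi> x\<bar> powr p \<partial>lborel)"
    unfolding lambda1_eq_Inf_candidates
    by (intro cInf_lower[OF Rayleigh_quotient_mem_lambda1_candidates[OF \<phi> p] bdd_below_lambda1_candidates])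
       simp
  also have "\<dots> \<le> measure lborel (cball c R) / ((R - 2 * \<delta> - R / Suc m) powr p * measure lborel (ball c \<delta>))"
    using cone_bump_energy_le[OF R \<delta> p, of c m] lower pos unfolding \<phi>_def
    by (intro frac_le) (auto intro!: integral_nonneg_AE)
  finally show ?thesis .
qed

lemma lambda1_candidates_nonempty:
  assumes ball: "ball c \<rho> \<subseteq> \<Omega>" and \<rho>: "\<rho> > 0" and p: "p > 0"
  shows "lambda1_candidates \<Omega> p \<noteq> {}"
proof -
  define \<phi> where "\<phi> = cone_bump c (\<rho> / 2) 3 (\<rho> / 16)"
  have "cball c (\<rho> / 2) \<subseteq> ball c \<rho>"
    using \<rho> by (simp add: cball_subset_ball_iff)
  then have "cball c (\<rho> / 2) \<subseteq> \<Omega>"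
    using ball by (rule order_trans)
  then have \<phi>: "\<phi> \<in> Cc1 \<Omega>"
    unfolding \<phi>_def using \<rho> by (intro cone_bump_Cc1) auto
  have "0 < (\<rho> / 2 - 2 * (\<rho> / 16) - \<rho> / 2 / Suc 3) powr p * measure lborel (ball c (\<rho> / 16))"
    using \<rho> by simp
  also have "\<dots> \<le> (\<integral>x. \<bar>\<phi> x\<bar> powr p \<partial>lborel)"
    unfolding \<phi>_def using \<rho> p by (intro cone_bump_norm_ge) auto
  finally have "(\<integral>x. norm (grad \<phi> x) powr p \<partial>lborel) / (\<integral>x. \<bar>\<phi> x\<bar> powr p \<partial>lborel)
      \<in> lambda1_candidates \<Omega> p"
    by (rule Rayleigh_quotient_mem_lambda1_candidates[OF \<phi> p])
  then show ?thesis
    by auto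
qed

lemma lambda1_nonneg: "lambda1_candidates \<Omega> p \<noteq> {} \<Longrightarrow> lambda1 \<Omega> p \<ge> 0"
  unfolding lambda1_eq_Inf_candidates by (intro cInf_greatest lambda1_candidates_nonneg)

lemma lambda1_root_eventually_less:
  assumes ball: "ball c \<rho> \<subseteq> \<Omega>" and \<rho>: "\<rho> > 0" and a: "a > 1 / \<rho>"
  shows "\<forall>\<^sub>F p in at_top. lambda1 \<Omega> p powr (1 / p) < a"
proof -
  have a_pos: "a > 0"
    using a \<rho> by (meson less_trans zero_less_divide_1_iff)
  define \<epsilon> where "\<epsilon> = \<rho> - 1 / a"
  have \<epsilon>: "0 < \<epsilon>" "\<epsilon> \<le> \<rho>"
    using a a_pos \<rho> by (auto simp: \<epsilon>_def field_simps)
  define R where "R = \<rho> - \<epsilon> / 4"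
  define \<delta> where "\<delta> = \<epsilon> / 16"
  have R: "0 < R" "R < \<rho>" and \<delta>: "\<delta> > 0"
    using \<epsilon> by (auto simp: R_def \<delta>_def)
  obtain m :: nat where "4 * R / \<epsilon> < m"
    using reals_Archimedean2 by blast
  then have "R / Suc m < \<epsilon> / 4"
    using \<epsilon> by (simp add: field_simps)
  define M where "M = R - 2 * \<delta> - R / Suc m"
  have M: "M > 1 / a"
    using \<open>R / Suc m < \<epsilon> / 4\<close> \<epsilon>(1) R_def \<epsilon>_def unfolding M_def \<delta>_def by linarith
  then have M_pos: "M > 0"
    using a_pos by (meson less_trans zero_less_divide_1_iff)
  have "1 < M * a"
    using M a_pos by (simp add: field_simps)
  then have "1 / M < a"
    using M_pos by (simp add: divide_less_eq mult.commute)
  have "cball c R \<subseteq> ball c \<rho>"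
    using R by (simp add: cball_subset_ball_iff)
  then have cball: "cball c R \<subseteq> \<Omega>"
    using ball by (rule order_trans)
  define A where "A = measure lborel (cball c R)"
  define B where "B = measure lborel (ball c \<delta>)"
  have A: "A > 0" and B: "B > 0"
    using R \<delta> by (simp_all add: A_def B_def)
  have "((\<lambda>p. A powr (1 / p) / (M * B powr (1 / p))) \<longlongrightarrow> 1 / (M * 1)) at_top"
    using A B M_pos by (intro tendsto_intros tendsto_powr_inverse_at_top) auto
  then have "\<forall>\<^sub>F p in at_top. A powr (1 / p) / (M * B powr (1 / p)) < a"
    using \<open>1 / M < a\<close> by (intro order_tendstoD(2)) auto
  then show ?thesis
    using eventually_gt_at_top[of 0]
  proof eventually_elim
    case (elim p)
    have "lambda1 \<Omega> p powr (1 / p) \<le> (A / (M powr p * B)) powr (1 / p)"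
      using lambda1_le_cone_bump[OF R(1) \<delta> elim(2) M_pos[unfolded M_def] cball]
        lambda1_nonneg[OF lambda1_candidates_nonempty[OF ball \<rho> elim(2)]] elim(2)
      unfolding A_def B_def M_def by (intro powr_mono2) auto
    also have "\<dots> = A powr (1 / p) / (M * B powr (1 / p))"
      using A B M_pos elim(2) by (simp add: powr_divide powr_mult powr_powr)
    finally show ?case
      using elim(1) by simp
  qed
qed

theorem lambda1_root_tendsto_inverse_inradius:
  fixes \<Omega> D :: "(real \<times> real) set"
  assumes ball: "ball c \<rho> \<subseteq> \<Omega>" and \<rho>: "\<rho> > 0"
    and D: "finite D" "\<And>n. n \<in> D \<Longrightarrow> norm n = 1"
    and exit: "\<And>x. x \<in> \<Omega> \<Longrightarrow> \<exists>n\<in>D. x - \<rho> *\<^sub>R n \<notin> \<Omega>"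
  shows "((\<lambda>p. lambda1 \<Omega> p powr (1 / p)) \<longlongrightarrow> 1 / \<rho>) at_top"
proof (rule order_tendstoI)
  fix a
  assume a: "a < 1 / \<rho>"
  have "c \<in> \<Omega>"
    using ball \<rho> by auto
  then have "D \<noteq> {}"
    using exit by blast
  then have N: "card D > 0"
    using D(1) by (simp add: card_gt_0_iff)
  have lower: "1 / (card D powr (1 / p) * \<rho>) \<le> lambda1 \<Omega> p powr (1 / p)" if p: "p \<ge> 1" for p
  proof -
    have "1 / (card D * \<rho> powr p) \<le> lambda1 \<Omega> p"
      using lambda1_candidates_nonempty[OF ball \<rho>] Poincare_exit_directions[OF D \<rho> p exit] p N \<rho>
      by (intro lambda1_ge_Poincare) auto
    then have "(1 / (card D * \<rho> powr p)) powr (1 / p) \<le> lambda1 \<Omega> p powr (1 / p)"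
      using N \<rho> p by (intro powr_mono2) auto
    also have "(1 / (card D * \<rho> powr p)) powr (1 / p) = 1 / (card D powr (1 / p) * \<rho>)"
      using N \<rho> p by (simp add: powr_divide powr_mult powr_powr)
    finally show ?thesis .
  qed
  have "((\<lambda>p. 1 / (card D powr (1 / p) * \<rho>)) \<longlongrightarrow> 1 / (1 * \<rho>)) at_top"
    using N \<rho> by (intro tendsto_intros tendsto_powr_inverse_at_top) auto
  then have "\<forall>\<^sub>F p in at_top. a < 1 / (card D powr (1 / p) * \<rho>)"
    using a by (intro order_tendstoD(1)) auto
  with eventually_ge_at_top[of 1] show "\<forall>\<^sub>F p in at_top. a < lambda1 \<Omega> p powr (1 / p)"
    by eventually_elim (use lower in fastforce)
next
  fix a
  assume "a > 1 / \<rho>"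
  then show "\<forall>\<^sub>F p in at_top. lambda1 \<Omega> p powr (1 / p) < a"
    by (rule lambda1_root_eventually_less[OF ball \<rho>])
qed

section \<open>The circular sector\<close>

definition sector_inradius :: "real \<Rightarrow> real" where
  "sector_inradius k = sin (pi / (2 * k)) / (1 + sin (pi / (2 * k)))"

definition sector_incenter :: "real \<Rightarrow> real \<times> real" where
  "sector_incenter k = (cos (pi / (2 * k)) / (1 + sin (pi / (2 * k))), sin (pi / (2 * k)) / (1 + sin (pi / (2 * k))))"

text \<open>Moving against these directions leaves the sector through the lower side, through the upper
  side, or across the tangent to the arc at the bisector, respectively.\<close>
definition sector_exit_dirs :: "real \<Rightarrow> (real \<times> real) set" where
  "sector_exit_dirs k = {(0, 1), (sin (pi / k), - cos (pi / k)), (- cos (pi / (2 * k)), - sin (pi / (2 * k)))}"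

lemma sin_half_sector_angle_pos: "k \<ge> 1 \<Longrightarrow> sin (pi / (2 * k)) > 0"
  by (intro sin_gt_zero) (auto simp: field_simps)

lemma sector_inradius_pos: "k \<ge> 1 \<Longrightarrow> sector_inradius k > 0"
  using sin_half_sector_angle_pos by (simp add: sector_inradius_def add_pos_pos)

lemma norm_sector_exit_dirs: "n \<in> sector_exit_dirs k \<Longrightarrow> norm n = 1"
  by (auto simp: sector_exit_dirs_def norm_Pair)

lemma sector_halfplanes:
  assumes k: "k \<ge> 1" and y: "y \<in> sector k"
  shows "snd y > 0" "fst y * sin (pi / k) - snd y * cos (pi / k) > 0"
    "fst y * cos (pi / (2 * k)) + snd y * sin (pi / (2 * k)) < 1"
proof -
  obtain \<rho> \<theta> where y: "y = (\<rho> * cos \<theta>, \<rho> * sin \<theta>)" "0 < \<rho>" "\<rho> < 1" "0 < \<theta>" "\<theta> < pi / k"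
    using y unfolding sector_def by blast
  have "pi / k \<le> pi"
    using k by (simp add: field_simps)
  then have "sin \<theta> > 0" "sin (pi / k - \<theta>) > 0"
    using y by (auto intro!: sin_gt_zero)
  then show "snd y > 0" "fst y * sin (pi / k) - snd y * cos (pi / k) > 0"
    using y by (simp_all add: sin_diff algebra_simps)
  have "fst y * cos (pi / (2 * k)) + snd y * sin (pi / (2 * k)) = \<rho> * cos (\<theta> - pi / (2 * k))"
    using y by (simp add: cos_diff algebra_simps)
  also have "\<dots> \<le> \<rho>"
    using y by (simp add: mult_left_le)
  finally show "fst y * cos (pi / (2 * k)) + snd y * sin (pi / (2 * k)) < 1"
    using y by simp
qed

text \<open>If \<open>x = (\<rho> cos \<theta>, \<rho> sin \<theta>)\<close> stayed inside along all three directions, then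
  \<open>\<rho> sin \<theta> > r\<close>, \<open>\<rho> sin (2b - \<theta>) > r\<close> and \<open>\<rho> cos (\<theta> - b) < 1 - r\<close> with \<open>b = \<pi>/(2k)\<close>;
  adding the first two gives \<open>2 r < 2 sin b \<rho> cos (\<theta> - b) < 2 sin b (1 - r) = 2 r\<close>.\<close>
lemma sector_exit:
  assumes k: "k \<ge> 1" and x: "x \<in> sector k"
  shows "\<exists>n\<in>sector_exit_dirs k. x - sector_inradius k *\<^sub>R n \<notin> sector k"
proof (rule ccontr)
  define b where "b = pi / (2 * k)"
  define r where "r = sector_inradius k"
  define s where "s = sin b"
  assume "\<not> ?thesis"
  then have inside: "x - r *\<^sub>R (0, 1) \<in> sector k" "x - r *\<^sub>R (sin (2 * b), - cos (2 * b)) \<in> sector k"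
    "x - r *\<^sub>R (- cos b, - s) \<in> sector k"
    by (auto simp: sector_exit_dirs_def r_def b_def s_def)
  obtain \<rho> \<theta> where x: "x = (\<rho> * cos \<theta>, \<rho> * sin \<theta>)"
    using x unfolding sector_def by blast
  have s: "s > 0"
    unfolding s_def b_def using sin_half_sector_angle_pos[OF k] .
  have rs: "r * (1 + s) = s"
    using s by (simp add: r_def s_def b_def sector_inradius_def field_simps)
  have pk: "pi / k = 2 * b"
    by (simp add: b_def)
  have "\<rho> * sin \<theta> - r > 0"
    using sector_halfplanes(1)[OF k inside(1)] x by simp
  moreover have "\<rho> * sin (2 * b - \<theta>) - r > 0"
  proof -
    let ?y = "x - r *\<^sub>R (sin (2 * b), - cos (2 * b))"
    have "fst ?y * sin (pi / k) - snd ?y * cos (pi / k) = \<rho> * sin (2 * b - \<theta>) - r"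
      using x pk by (simp add: sin_diff algebra_simps) (metis sin_cos_squared_add3 distrib_left mult_1_right)
    then show ?thesis
      using sector_halfplanes(2)[OF k inside(2)] by simp
  qed
  ultimately have "2 * r < \<rho> * (sin \<theta> + sin (2 * b - \<theta>))"
    by (simp add: algebra_simps)
  also have "sin \<theta> + sin (2 * b - \<theta>) = 2 * s * cos (\<theta> - b)"
    unfolding s_def sin_diff cos_diff sin_double cos_double_sin by (simp add: algebra_simps power2_eq_square)
  also have "\<rho> * (2 * s * cos (\<theta> - b)) \<le> 2 * s * (1 - r)"
  proof -
    let ?y = "x - r *\<^sub>R (- cos b, - s)"
    have "fst ?y * cos (pi / (2 * k)) + snd ?y * sin (pi / (2 * k)) = \<rho> * cos (\<theta> - b) + r"
      using x by (simp add: b_def s_def cos_diff algebra_simps)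
         (metis sin_cos_squared_add3 distrib_left mult_1_right)
    then have "\<rho> * cos (\<theta> - b) \<le> 1 - r"
      using sector_halfplanes(3)[OF k inside(3)] by simp
    then show ?thesis
      using s by (simp add: mult_left_mono mult.left_commute)
  qed
  also have "2 * s * (1 - r) = 2 * r"
    using rs by (simp add: algebra_simps)
  finally show False
    by simp
qed

lemma upper_half_plane_polar:
  fixes y :: "real \<times> real"
  assumes "snd y > 0"
  obtains \<theta> where "y = (norm y * cos \<theta>, norm y * sin \<theta>)" "0 < \<theta>" "\<theta> < pi"
proof -
  obtain a b where y: "y = (a, b)"
    by (cases y)
  have b: "b > 0"
    using assms y by simp
  define \<rho> where "\<rho> = norm y"
  have \<rho>2: "\<rho>\<^sup>2 = a\<^sup>2 + b\<^sup>2" and \<rho>: "\<rho> > 0"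
    using b by (simp_all add: \<rho>_def y norm_Pair add_nonneg_pos)
  have "a\<^sup>2 < \<rho>\<^sup>2"
    using \<rho>2 b by simp
  then have "\<bar>a\<bar> < \<rho>"
    using \<rho> by (metis power2_abs power_less_imp_less_base less_imp_le)
  then have t: "- 1 < a / \<rho>" "a / \<rho> < 1"
    using \<rho> by (auto simp: abs_less_iff field_simps)
  define \<theta> where "\<theta> = arccos (a / \<rho>)"
  have "(b / \<rho>)\<^sup>2 = (\<rho>\<^sup>2 - a\<^sup>2) / \<rho>\<^sup>2"
    using \<rho>2 by (simp add: power_divide)
  also have "\<dots> = 1 - (a / \<rho>)\<^sup>2"
    using \<rho> by (simp add: power_divide diff_divide_distrib)
  finally have "1 - (a / \<rho>)\<^sup>2 = (b / \<rho>)\<^sup>2" ..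
  moreover have "sin \<theta> = sqrt (1 - (a / \<rho>)\<^sup>2)"
    unfolding \<theta>_def using t by (intro sin_arccos_abs) simp
  ultimately have "sin \<theta> = b / \<rho>"
    using b \<rho> by simp
  moreover have "cos \<theta> = a / \<rho>"
    unfolding \<theta>_def using t by simp
  moreover have "0 < \<theta>" "\<theta> < pi"
    unfolding \<theta>_def using arccos_lt_bounded t by blast+
  ultimately have "y = (\<rho> * cos \<theta>, \<rho> * sin \<theta>)"
    using \<rho> by (simp add: y)
  then show ?thesis
    using that \<open>0 < \<theta>\<close> \<open>\<theta> < pi\<close> unfolding \<rho>_def by blast
qed

lemma sector_memI:
  assumes k: "k \<ge> 1" and y: "snd y > 0" "fst y * sin (pi / k) - snd y * cos (pi / k) > 0" "norm y < 1"
  shows "y \<in> sector k"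
proof -
  obtain \<theta> where \<theta>: "y = (norm y * cos \<theta>, norm y * sin \<theta>)" "0 < \<theta>" "\<theta> < pi"
    using upper_half_plane_polar[OF y(1)] by blast
  have "\<theta> < pi / k"
  proof (rule ccontr)
    assume "\<not> \<theta> < pi / k"
    moreover have "pi / k > 0"
      using k by simp
    ultimately have "sin (\<theta> - pi / k) \<ge> 0"
      using \<theta>(3) by (intro sin_ge_zero) auto
    moreover have "fst y * sin (pi / k) - snd y * cos (pi / k) = - norm y * sin (\<theta> - pi / k)"
      by (subst (1 2) \<theta>(1)) (simp add: sin_diff algebra_simps)
    ultimately show False
      using y(2) mult_nonneg_nonneg[OF norm_ge_zero[of y] \<open>sin (\<theta> - pi / k) \<ge> 0\<close>] by linarith
  qed
  moreover have "norm y > 0"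
    using y(1) by auto
  ultimately show ?thesis
    unfolding sector_def using \<theta> y(3) by blast
qed

lemma ball_subset_sector:
  assumes k: "k \<ge> 1"
  shows "ball (sector_incenter k) (sector_inradius k) \<subseteq> sector k"
proof
  fix y
  assume "y \<in> ball (sector_incenter k) (sector_inradius k)"
  define b where "b = pi / (2 * k)"
  define s where "s = sin b"
  define d where "d = 1 / (1 + s)"
  have s: "s > 0"
    unfolding s_def b_def using sin_half_sector_angle_pos[OF k] .
  have center: "sector_incenter k = (d * cos b, d * s)" and radius: "sector_inradius k = d * s"
    by (simp_all add: sector_incenter_def sector_inradius_def d_def s_def b_def)
  define e where "e = y - sector_incenter k"
  obtain e1 e2 where e: "e = (e1, e2)"
    by (cases e)
  have ne: "norm e < d * s"
    using \<open>y \<in> ball _ _\<close> by (simp add: e_def dist_norm norm_minus_commute radius)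
  have "y = sector_incenter k + e"
    by (simp add: e_def)
  then have y: "y = (d * cos b + e1, d * s + e2)"
    using e by (simp add: center)
  show "y \<in> sector k"
  proof (rule sector_memI[OF k])
    show "snd y > 0"
      using y ne norm_snd_le[of e2 e1] e by simp
    have "cos b * sin (2 * b) - s * cos (2 * b) = s"
      using sin_diff[of "2 * b" b] by (simp add: s_def mult.commute)
    moreover have "\<bar>e1 * sin (2 * b) - e2 * cos (2 * b)\<bar> \<le> norm e"
      using Cauchy_Schwarz_ineq2[of e "(sin (2 * b), - cos (2 * b))"] e by (simp add: inner_prod_def norm_Pair)
    moreover have "pi / k = 2 * b"
      by (simp add: b_def)
    ultimately show "fst y * sin (pi / k) - snd y * cos (pi / k) > 0"
      using ne y by (simp add: algebra_simps)
    have "(d * cos b)\<^sup>2 + (d * s)\<^sup>2 = d\<^sup>2"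
      by (simp add: s_def power_mult_distrib flip: distrib_left)
    moreover have "d > 0"
      using s by (simp add: d_def)
    ultimately have "norm (sector_incenter k) = d"
      by (simp add: center norm_Pair)
    then have "norm y \<le> d + norm e"
      using norm_triangle_ineq[of "sector_incenter k" e] by (simp add: e_def)
    also have "\<dots> < d + d * s"
      using ne by simp
    also have "\<dots> = 1"
      using s by (simp add: d_def field_simps)
    finally show "norm y < 1" .
  qed
qed

theorem lemma2p6:
  fixes k :: real
  assumes "k \<ge> 1"
  shows "((\<lambda>p. lambda1 (sector k) p powr (1 / p)) \<longlongrightarrow>
           (1 + sin (pi / (2 * k))) / sin (pi / (2 * k))) at_top"
proof -
  have "finite (sector_exit_dirs k)"
    by (simp add: sector_exit_dirs_def)
  from lambda1_root_tendsto_inverse_inradius[OF ball_subset_sector[OF assms] sector_inradius_pos[OF assms]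
      this norm_sector_exit_dirs sector_exit[OF assms]]
  show ?thesis
    by (simp add: sector_inradius_def)
qed

end
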